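(* If there is a fork in governance, then the auditor can assign blame to at least $f+1$ misbehaving replicas.
   Context: System model. A service runs on a set of replicas (its configuration), $N$ replicas per configuration with $f=\lceil N/3\rceil-1$, executing the L-PBFT protocol (PBFT-style, with a ledger); each batch at sequence number $s$ is prepared by $N-f$ replicas of the current configuration signing pre-prepare/prepare messages, and pipelining depth is $P$. Governance transactions change the configuration (members and replicas): a referendum is passed by a final vote transaction; the primary ends its batch after each governance transaction, and after the final vote committed at sequence number $s$, it issues $2P$ empty "end-of-configuration" batches; the $P$-th end-of-configuration batch (at $s+P$) contains evidence that the batch at $s$ committed and, in its pre-prepare, the committed Merkle root (the root of the ledger's Merkle tree at $s$). A correct replica prepares the $P$-th end-of-configuration batch at $s+P$ only after the final vote transaction triggering the configuration change has committed at $s$ (hence all preceding governance transactions have committed). The governance sub-ledger consists of the governance transactions with their evidence and, for each configuration change, the $P$-th and $2P$-th end-of-configuration batches. The configuration number of a configuration is its distance from the genesis configuration (number $0$). Two $P$-th end-of-configuration batches are equivalent if they are at the same ledger index and sequence number and are preceded by the same valid governance sub-ledger (their pre-prepares contain the same committed Merkle root). There is a fork in governance if there exist two $P$-th end-of-configuration batches for the same configuration number, each belonging to a valid governance sub-ledger, that are not equivalent. The auditor assigns blame to a replica by exhibiting statements signed by that replica that a correct replica would never sign. *)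

theory Defs
  imports Complex_Main
begin

text \<open>Abstract model of the governance sub-ledger of L-PBFT.

A governance sub-ledger is a list of configuration changes.  Entry number k
(0-based) describes the configuration change that ends configuration number k
and starts configuration number k+1:
  gtxs  -- the governance transactions (with their evidence) committed in
           configuration k, up to and including the final vote;
  ncfg  -- the replica set of the new configuration k+1 (the outcome of the
           referendum passed by the final vote);
  lidx  -- ledger index of the P-th end-of-configuration batch;
  sqn   -- sequence number of the P-th end-of-configuration batch;
  preps -- the replicas whose signed pre-prepare/prepare messages for that
           P-th end-of-configuration batch are contained in the evidence.\<close>

record ('r, 'g) eoc =
  gtxs  :: "'g list"
  ncfg  :: "'r set"
  lidx  :: nat
  sqn   :: nat
  preps :: "'r set"

definition fmax :: "nat \<Rightarrow> nat" where
  "fmax N = nat (ceiling (real N / 3)) - 1"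

fun cfg :: "'r set \<Rightarrow> ('r, 'g) eoc list \<Rightarrow> nat \<Rightarrow> 'r set" where
  "cfg G L 0 = G"
| "cfg G L (Suc j) = ncfg (L ! j)"

definition valid_gov :: "nat \<Rightarrow> 'r set \<Rightarrow> ('r, 'g) eoc list \<Rightarrow> bool" where
  "valid_gov N G L \<longleftrightarrow>
     card G = N \<and>
     (\<forall>j < length L. card (ncfg (L ! j)) = N) \<and>
     (\<forall>j < length L. preps (L ! j) \<subseteq> cfg G L j \<and> card (preps (L ! j)) \<ge> N - fmax N)"

text \<open>What a replica signs when preparing the P-th end-of-configuration batch of
entry j of L: a statement identifying that batch, namely the preceding
governance sub-ledger (committed to by the committed Merkle root in the
pre-prepare), its ledger index and its sequence number.  The governance
transactions of the configuration being ended and the resulting new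
configuration are part of the preceding governance sub-ledger.\<close>
type_synonym ('r, 'g) eoc_stmt = "('r, 'g) eoc list \<times> 'g list \<times> 'r set \<times> nat \<times> nat"

definition stmt :: "('r, 'g) eoc list \<Rightarrow> nat \<Rightarrow> ('r, 'g) eoc_stmt" where
  "stmt L j = (take j L, gtxs (L ! j), ncfg (L ! j), lidx (L ! j), sqn (L ! j))"

definition stmt_cfgno :: "('r, 'g) eoc_stmt \<Rightarrow> nat" where
  "stmt_cfgno s = length (fst s)"

definition equiv_eoc :: "('r, 'g) eoc list \<Rightarrow> ('r, 'g) eoc list \<Rightarrow> nat \<Rightarrow> bool" where
  "equiv_eoc L1 L2 k \<longleftrightarrow> stmt L1 k = stmt L2 k"

definition fork :: "nat \<Rightarrow> 'r set \<Rightarrow> ('r, 'g) eoc list \<Rightarrow> ('r, 'g) eoc list \<Rightarrow> nat \<Rightarrow> bool" where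
  "fork N G L1 L2 k \<longleftrightarrow>
     valid_gov N G L1 \<and> valid_gov N G L2 \<and> k < length L1 \<and> k < length L2 \<and>
     \<not> equiv_eoc L1 L2 k"

definition signed_in :: "('r, 'g) eoc list \<Rightarrow> 'r \<Rightarrow> ('r, 'g) eoc_stmt set" where
  "signed_in L r = {stmt L j | j. j < length L \<and> r \<in> preps (L ! j)}"

text \<open>A correct replica follows a single linear ledger and prepares the P-th
end-of-configuration batch of a configuration only after the final vote of
that configuration committed; hence it signs at most one such batch per
configuration number.\<close>
definition correct_may_sign :: "('r, 'g) eoc_stmt set \<Rightarrow> bool" where
  "correct_may_sign S \<longleftrightarrow>
     (\<forall>s1 \<in> S. \<forall>s2 \<in> S. stmt_cfgno s1 = stmt_cfgno s2 \<longrightarrow> s1 = s2)"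

definition blamed :: "('r, 'g) eoc list set \<Rightarrow> 'r \<Rightarrow> bool" where
  "blamed E r \<longleftrightarrow> \<not> correct_may_sign (\<Union>L \<in> E. signed_in L r)"

end

theory Submission
  imports Defs
begin

text \<open>Let j be the first configuration number at which the two sub-ledgers sign different
statements. Up to j they agree on every new configuration, so both P-th end-of-configuration
batches of number j were prepared by N - f replicas of the same configuration of N replicas.
Since N > 3f, these two quorums share at least f + 1 replicas, each of which signed two
different statements for configuration number j, which no correct replica does.\<close>

lemma three_fmax_less: "0 < N \<Longrightarrow> 3 * fmax N < N"
proof -
  assume "0 < N"
  define c where "c = ceiling (real N / 3)"
  have "real_of_int c < real N / 3 + 1"
    unfolding c_def by linarith
  then have "3 * c < int N + 3"
    by linarith
  then have "3 * (nat c - 1) < N"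
    using \<open>0 < N\<close> by linarith
  then show ?thesis
    unfolding fmax_def c_def .
qed

lemma card_add_le_card_Int:
  assumes "finite C" "A \<subseteq> C" "B \<subseteq> C"
  shows "card A + card B \<le> card C + card (A \<inter> B)"
proof -
  have "finite A" "finite B"
    using assms finite_subset by auto
  then have "card A + card B = card (A \<union> B) + card (A \<inter> B)"
    by (rule card_Un_Int)
  moreover have "card (A \<union> B) \<le> card C"
    using assms by (simp add: card_mono)
  ultimately show ?thesis
    by linarith
qed

lemma quorum_intersection:
  assumes "0 < N" "card C = N"
    and "A \<subseteq> C" "N - fmax N \<le> card A"
    and "B \<subseteq> C" "N - fmax N \<le> card B"
  shows "fmax N + 1 \<le> card (A \<inter> B)"
proof -
  have "finite C"
    using assms(1,2) card_ge_0_finite by blast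
  then have "card A + card B \<le> N + card (A \<inter> B)"
    using card_add_le_card_Int assms(2,3,5) by metis
  then show ?thesis
    using assms(4,6) three_fmax_less[OF assms(1)] by linarith
qed

lemma valid_gov_card_cfg:
  assumes "valid_gov N G L" "j \<le> length L"
  shows "card (cfg G L j) = N"
  using assms by (cases j) (auto simp: valid_gov_def)

lemma stmt_cfgno_stmt: "j < length L \<Longrightarrow> stmt_cfgno (stmt L j) = j"
  by (simp add: stmt_cfgno_def stmt_def)

lemma first_divergence_same_cfg:
  assumes "stmt L1 k \<noteq> stmt L2 k"
  obtains j where "j \<le> k" "stmt L1 j \<noteq> stmt L2 j" "cfg G L1 j = cfg G L2 j"
proof -
  define j where "j = (LEAST i. stmt L1 i \<noteq> stmt L2 i)"
  have "stmt L1 j \<noteq> stmt L2 j"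
    unfolding j_def using assms by (rule LeastI)
  moreover have "j \<le> k"
    unfolding j_def using assms by (rule Least_le)
  moreover have "cfg G L1 j = cfg G L2 j"
  proof (cases j)
    case (Suc i)
    then have "i < j"
      by simp
    then have "stmt L1 i = stmt L2 i"
      unfolding j_def by (rule not_less_Least[THEN notnotD])
    then show ?thesis
      using Suc by (simp add: stmt_def)
  qed simp
  ultimately show ?thesis
    using that by blast
qed

lemma blamed_if_prepared_both:
  assumes "L1 \<in> E" "L2 \<in> E" "j < length L1" "j < length L2"
    and "r \<in> preps (L1 ! j)" "r \<in> preps (L2 ! j)"
    and "stmt L1 j \<noteq> stmt L2 j"
  shows "blamed E r"
proof -
  have "stmt L1 j \<in> (\<Union>L \<in> E. signed_in L r)" "stmt L2 j \<in> (\<Union>L \<in> E. signed_in L r)"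
    using assms(1-6) unfolding signed_in_def by auto
  moreover have "stmt_cfgno (stmt L1 j) = stmt_cfgno (stmt L2 j)"
    using assms(3,4) by (simp add: stmt_cfgno_stmt)
  ultimately show ?thesis
    using assms(7) unfolding blamed_def correct_may_sign_def by blast
qed

theorem lemma7:
  fixes N :: nat and G :: "'r set" and L1 L2 :: "('r, 'g) eoc list" and k :: nat
  assumes "N > 0"
    and "fork N G L1 L2 k"
  shows "\<exists>B. B \<subseteq> {r. blamed {L1, L2} r} \<and> card B \<ge> fmax N + 1"
proof -
  have v1: "valid_gov N G L1" and v2: "valid_gov N G L2"
    and k1: "k < length L1" and k2: "k < length L2" and ne: "stmt L1 k \<noteq> stmt L2 k"
    using assms(2) unfolding fork_def equiv_eoc_def by auto
  obtain j where jk: "j \<le> k" and diverge: "stmt L1 j \<noteq> stmt L2 j"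
    and same_cfg: "cfg G L1 j = cfg G L2 j"
    using ne by (rule first_divergence_same_cfg)
  let ?B = "preps (L1 ! j) \<inter> preps (L2 ! j)"
  have "card (cfg G L1 j) = N"
    using v1 jk k1 by (simp add: valid_gov_card_cfg)
  moreover have "preps (L1 ! j) \<subseteq> cfg G L1 j" "N - fmax N \<le> card (preps (L1 ! j))"
    using v1 jk k1 unfolding valid_gov_def by auto
  moreover have "preps (L2 ! j) \<subseteq> cfg G L1 j" "N - fmax N \<le> card (preps (L2 ! j))"
    using v2 jk k2 unfolding same_cfg valid_gov_def by auto
  ultimately have "fmax N + 1 \<le> card ?B"
    by (rule quorum_intersection[OF assms(1)])
  moreover have "?B \<subseteq> {r. blamed {L1, L2} r}"
    using blamed_if_prepared_both[of L1 "{L1, L2}" L2 j] jk k1 k2 diverge by auto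
  ultimately show ?thesis
    by blast
qed

end
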